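(* Let $a>0$, $\beta>0$, let $\lambda$ be feasible, let $0<\xi<a$, and let $0<C_L<1$. Then there exists $0<\delta_L(\beta,\lambda,\xi/a,C_L)\le\delta_\mu(\beta,\lambda)$ such that for every $0<\delta\le\delta_L$ and every $k\ge k_0(\delta)$ we have $L\ge C_L$, where \[ L=\left(1-\mathrm{e}^{-2k\xi}\right)+\frac{\lambda^2\delta^{2\beta}+4}{(2\delta+\lambda\delta^{\beta})^2}\,\mathrm{e}^{-4ka}\left(\mathrm{e}^{2k\xi}-1\right). \]
   Context: For $0<\delta<1$ and constants $\beta>0$, $\lambda\in\mathbb{R}$, put $\mu=\delta+\lambda\delta^{\beta}$. The constant $\lambda$ is called feasible if $\lambda>0$ when $0<\beta<1$, $\lambda\ge -1$ when $\beta=1$, and $\lambda\neq 0$ when $\beta>1$. For feasible $\lambda$, $\delta_\mu=\delta_\mu(\beta,\lambda)\in(0,1)$ denotes a number such that $\mu\ge 0$ for all $0<\delta\le\delta_\mu$. Define \[ k_0(\delta)=\frac{1}{2a}\ln\!\left(\frac{1}{2\delta^2+\lambda\delta^{\beta+1}}\right). \] *)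

theory Defs
  imports Complex_Main
begin

definition feasible :: "real \<Rightarrow> real \<Rightarrow> bool" where
  "feasible bet lam \<longleftrightarrow>
     (bet < 1 \<longrightarrow> lam > 0) \<and> (bet = 1 \<longrightarrow> lam \<ge> -1) \<and> (bet > 1 \<longrightarrow> lam \<noteq> 0)"

definition mu :: "real \<Rightarrow> real \<Rightarrow> real \<Rightarrow> real" where
  "mu bet lam \<delta> = \<delta> + lam * \<delta> powr bet"

definition is_delta_mu :: "real \<Rightarrow> real \<Rightarrow> real \<Rightarrow> bool" where
  "is_delta_mu bet lam d \<longleftrightarrow> 0 < d \<and> d < 1 \<and> (\<forall>\<delta>. 0 < \<delta> \<and> \<delta> \<le> d \<longrightarrow> mu bet lam \<delta> \<ge> 0)"

definition k0 :: "real \<Rightarrow> real \<Rightarrow> real \<Rightarrow> real \<Rightarrow> real" where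
  "k0 a bet lam \<delta> = 1 / (2 * a) * ln (1 / (2 * \<delta>^2 + lam * \<delta> powr (bet + 1)))"

definition Lfun :: "real \<Rightarrow> real \<Rightarrow> real \<Rightarrow> real \<Rightarrow> real \<Rightarrow> real \<Rightarrow> real" where
  "Lfun a \<xi> bet lam \<delta> k =
     (1 - exp (-2 * k * \<xi>))
     + (lam^2 * \<delta> powr (2 * bet) + 4) / (2 * \<delta> + lam * \<delta> powr bet)^2
       * exp (-4 * k * a) * (exp (2 * k * \<xi>) - 1)"

end

theory Submission
  imports Defs
begin

text \<open>The second summand of L is nonnegative, so it suffices to make the first one large.
  Write D = 2 \<delta>^2 + \<lambda> \<delta>^(\<beta>+1) = \<delta> (\<delta> + \<mu>). The condition k \<ge> k0(\<delta>) = ln(1/D)/(2a) gives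
  exp(-2k\<xi>) \<le> D^(\<xi>/a), and D \<le> (2 + |\<lambda>|) \<delta> is as small as we like once \<delta> is small.\<close>

lemma Lfun_ge_one_minus_exp:
  fixes k \<xi> :: real
  assumes "0 \<le> k" and "0 \<le> \<xi>"
  shows "1 - exp (-2 * k * \<xi>) \<le> Lfun a \<xi> bet lam \<delta> k"
proof -
  have "exp (2 * k * \<xi>) \<ge> 1" using assms by simp
  then have "(lam^2 * \<delta> powr (2 * bet) + 4) / (2 * \<delta> + lam * \<delta> powr bet)^2
      * exp (-4 * k * a) * (exp (2 * k * \<xi>) - 1) \<ge> 0"
    by (intro mult_nonneg_nonneg divide_nonneg_nonneg) auto
  then show ?thesis unfolding Lfun_def by linarith
qed

lemma k0_argument_bounds:
  fixes bet lam \<delta> :: real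
  assumes "0 < \<delta>" and "\<delta> \<le> 1" and "bet > 0" and "mu bet lam \<delta> \<ge> 0"
  shows "0 < 2 * \<delta>^2 + lam * \<delta> powr (bet + 1)"
    and "2 * \<delta>^2 + lam * \<delta> powr (bet + 1) \<le> (2 + \<bar>lam\<bar>) * \<delta>"
proof -
  have split: "2 * \<delta>^2 + lam * \<delta> powr (bet + 1) = \<delta> * \<delta> + \<delta> * mu bet lam \<delta>"
    using assms(1) by (simp add: mu_def powr_add power2_eq_square algebra_simps)
  show "0 < 2 * \<delta>^2 + lam * \<delta> powr (bet + 1)"
    unfolding split using assms by (simp add: add_pos_nonneg)
  have "lam * \<delta> powr bet \<le> \<bar>lam\<bar> * \<delta> powr bet" by (simp add: mult_right_mono)
  also have "\<dots> \<le> \<bar>lam\<bar>" using assms by (simp add: powr_le1 mult_left_le)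
  finally have "lam * \<delta> powr bet \<le> \<bar>lam\<bar>" .
  then have "\<delta> * mu bet lam \<delta> \<le> \<delta> * (\<delta> + \<bar>lam\<bar>)"
    using assms(1) unfolding mu_def by (intro mult_left_mono) auto
  moreover have "\<delta> * \<delta> \<le> \<delta>" using assms by (simp add: mult_left_le)
  ultimately show "2 * \<delta>^2 + lam * \<delta> powr (bet + 1) \<le> (2 + \<bar>lam\<bar>) * \<delta>"
    unfolding split by (simp add: algebra_simps)
qed

lemma nonneg_if_ln_threshold_le:
  fixes a D k :: real
  assumes "a > 0" and "0 < D" and "D \<le> 1" and "1 / (2 * a) * ln (1 / D) \<le> k"
  shows "0 \<le> k"
proof -
  have "0 \<le> ln (1 / D)" using assms(2,3) by (simp add: ln_div)
  then show ?thesis using assms(1,4) by (smt (verit) divide_nonneg_nonneg mult_nonneg_nonneg)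
qed

lemma exp_le_powr_if_ln_threshold_le:
  fixes a D k \<xi> :: real
  assumes "a > 0" and "0 < D" and "1 / (2 * a) * ln (1 / D) \<le> k" and "0 \<le> \<xi>"
  shows "exp (-2 * k * \<xi>) \<le> D powr (\<xi> / a)"
proof -
  have "- ln D \<le> 2 * a * k"
    using assms(1-3) by (simp add: ln_div field_simps)
  then have "(\<xi> / a) * (- ln D) \<le> (\<xi> / a) * (2 * a * k)"
    using assms by (intro mult_left_mono) auto
  then have "-2 * k * \<xi> \<le> (\<xi> / a) * ln D"
    using assms(1) by (simp add: field_simps)
  then show ?thesis
    using assms(2) by (simp add: powr_def)
qed

theorem lemma4p2:
  fixes bet lam d_mu r C_L :: real
  assumes "bet > 0" and "feasible bet lam" and "is_delta_mu bet lam d_mu"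
    and "0 < r" and "r < 1" and "0 < C_L" and "C_L < 1"
  shows "\<exists>delta_L. 0 < delta_L \<and> delta_L \<le> d_mu \<and>
    (\<forall>a \<xi> \<delta> k. a > 0 \<and> 0 < \<xi> \<and> \<xi> < a \<and> \<xi> / a = r \<and> 0 < \<delta> \<and> \<delta> \<le> delta_L
       \<and> k \<ge> k0 a bet lam \<delta> \<longrightarrow> Lfun a \<xi> bet lam \<delta> k \<ge> C_L)"
proof -
  define q where "q = (1 - C_L) powr (1 / r)"
  have "0 < q" and "q < 1" and q_powr: "q powr r = 1 - C_L"
    using assms(4,6,7) powr_less_mono2[of "1 / r" "1 - C_L" 1]
    by (simp_all add: q_def powr_powr)
  define dl where "dl = min d_mu (q / (2 + \<bar>lam\<bar>))"
  have "0 < d_mu" "d_mu < 1" using assms(3) by (simp_all add: is_delta_mu_def)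
  have "0 < dl" using \<open>0 < d_mu\<close> \<open>0 < q\<close> by (simp add: dl_def add_pos_nonneg)
  moreover have "Lfun a \<xi> bet lam \<delta> k \<ge> C_L"
    if "a > 0" "0 < \<xi>" "\<xi> / a = r" "0 < \<delta>" "\<delta> \<le> dl" "k \<ge> k0 a bet lam \<delta>" for a \<xi> \<delta> k
  proof -
    define D where "D = 2 * \<delta>^2 + lam * \<delta> powr (bet + 1)"
    have "\<delta> \<le> d_mu" "(2 + \<bar>lam\<bar>) * \<delta> \<le> q"
      using \<open>\<delta> \<le> dl\<close> by (simp_all add: dl_def pos_le_divide_eq add_pos_nonneg mult.commute)
    then have "mu bet lam \<delta> \<ge> 0" "\<delta> \<le> 1"
      using assms(3) \<open>0 < \<delta>\<close> \<open>d_mu < 1\<close> by (auto simp: is_delta_mu_def)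
    then have "0 < D" "D \<le> q"
      using k0_argument_bounds[where lam = lam, OF \<open>0 < \<delta>\<close> _ assms(1)] \<open>(2 + \<bar>lam\<bar>) * \<delta> \<le> q\<close>
      unfolding D_def by auto
    have "D \<le> 1" using \<open>D \<le> q\<close> \<open>q < 1\<close> by simp
    have k_ge: "1 / (2 * a) * ln (1 / D) \<le> k"
      using \<open>k \<ge> k0 a bet lam \<delta>\<close> by (simp add: k0_def D_def)
    have "exp (-2 * k * \<xi>) \<le> D powr r"
      using exp_le_powr_if_ln_threshold_le[OF \<open>a > 0\<close> \<open>0 < D\<close> k_ge, of \<xi>] \<open>0 < \<xi>\<close> \<open>\<xi> / a = r\<close>
      by simp
    also have "\<dots> \<le> 1 - C_L"
      using \<open>0 < D\<close> \<open>D \<le> q\<close> assms(4) q_powr by (metis less_eq_real_def powr_mono2)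
    finally have "exp (-2 * k * \<xi>) \<le> 1 - C_L" .
    moreover have "0 \<le> k"
      using nonneg_if_ln_threshold_le[OF \<open>a > 0\<close> \<open>0 < D\<close> \<open>D \<le> 1\<close> k_ge] .
    ultimately show ?thesis
      using Lfun_ge_one_minus_exp[of k \<xi> a bet lam \<delta>] \<open>0 < \<xi>\<close> by linarith
  qed
  ultimately show ?thesis by (intro exI[of _ dl]) (auto simp: dl_def)
qed

end
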